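(* Let $n\ge1$, $a_{i0}\ge0$, $a_{ij}\ge 0$ and $\pi_i>0$ for $i,j=1,\ldots,n$, let $\varepsilon>0$, and let $\mu_1,\ldots,\mu_n$ satisfy $\mu_i\ge\sum_{j\ne i}(a_{ij}+a_{ji})/2$. For $u\in(0,\infty)^n$ define $$A_{ij}(u)=\delta_{ij}a_{i0}+\delta_{ij}\sum_{k=1}^na_{ik}u_k+a_{ij}u_i,\qquad H_{ij}(u)=\delta_{ij}\frac{\pi_i}{u_i^{2}},$$ $$H_{\varepsilon,ij}(u)=\delta_{ij}\Big(\frac{\pi_i}{u_i^2}+\frac{\varepsilon}{u_i}\Big),\qquad A_\varepsilon(u)=A(u)+\varepsilon A^0(u),\quad A^0_{ij}(u)=\delta_{ij}\frac{\mu_i}{\pi_i}u_i^2.$$ Then for all $z\in\mathbb{R}^n$ and $u\in(0,\infty)^n$, $$z^TH_\varepsilon(u)A_\varepsilon(u)z\ge z^TH(u)A(u)z+2\varepsilon\sum_{i=1}^na_{ii}z_i^2+\varepsilon^2\sum_{i=1}^n\frac{\mu_i}{\pi_i}u_iz_i^2.$$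
   Context: $\delta_{ij}$ is the Kronecker symbol. $H_\varepsilon(u)$ is the Hessian of $h(u)+\varepsilon\sum_iu_i(\log u_i-1)$ with $h(u)=\sum_i\pi_i(u_i-\log u_i)$. *)

theory Defs
  imports "HOL-Analysis.Analysis"
begin

text \<open>Index set {1..n} is rendered as a finite type 'n; vectors are real^'n,
  matrices real^'n^'n. a0 $ i = a_{i0}, a $ i $ j = a_{ij}.\<close>

definition A_mat :: "real^'n \<Rightarrow> real^'n^'n \<Rightarrow> real^'n \<Rightarrow> real^'n^'n" where
  "A_mat a0 a u = (\<chi> i j. (if i = j then a0$i + (\<Sum>k\<in>UNIV. a$i$k * u$k) else 0) + a$i$j * u$i)"

definition H_mat :: "real^'n \<Rightarrow> real^'n \<Rightarrow> real^'n^'n" where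
  "H_mat p u = (\<chi> i j. if i = j then p$i / (u$i)^2 else 0)"

definition H_eps_mat :: "real^'n \<Rightarrow> real \<Rightarrow> real^'n \<Rightarrow> real^'n^'n" where
  "H_eps_mat p eps u = (\<chi> i j. if i = j then p$i / (u$i)^2 + eps / u$i else 0)"

definition A0_mat :: "real^'n \<Rightarrow> real^'n \<Rightarrow> real^'n \<Rightarrow> real^'n^'n" where
  "A0_mat mu p u = (\<chi> i j. if i = j then mu$i / p$i * (u$i)^2 else 0)"

definition A_eps_mat :: "real^'n \<Rightarrow> real^'n^'n \<Rightarrow> real^'n \<Rightarrow> real^'n \<Rightarrow> real \<Rightarrow> real^'n \<Rightarrow> real^'n^'n" where
  "A_eps_mat a0 a mu p eps u = A_mat a0 a u + eps *\<^sub>R A0_mat mu p u"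

end

theory Submission
  imports Defs
begin

text \<open>Since \<open>H_eps = H + eps diag(1/u)\<close> and \<open>A_eps = A + eps A0\<close>, the product \<open>H_eps A_eps\<close> equals
  \<open>H A + eps diag(1/u) A\<close> plus \<open>eps\<close> times the diagonal matrix with entries \<open>mu_i + eps mu_i u_i / pi_i\<close>.
  In the quadratic form of \<open>diag(1/u) A\<close> the diagonal part of \<open>A\<close> contributes at least
  \<open>\<Sum> a_ii z_i^2\<close> (as \<open>a_ii u_i \<le> a_i0 + \<Sum>_k a_ik u_k\<close>), while by \<open>2 z_i z_j \<ge> - z_i^2 - z_j^2\<close> the
  remaining part \<open>\<Sum> a_ij z_i z_j\<close> is at least \<open>\<Sum> (a_ii - mu_i) z_i^2\<close>. The deficit
  \<open>- eps \<Sum> mu_i z_i^2\<close> is absorbed by the diagonal matrix.\<close>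

definition diag_mat :: "('n::finite \<Rightarrow> real) \<Rightarrow> real^'n^'n" where
  "diag_mat d = (\<chi> i j. if i = j then d i else 0)"

lemma inner_matrix_vector_mult:
  fixes M :: "real^'n^'n"
  shows "z \<bullet> (M *v z) = (\<Sum>i\<in>UNIV. \<Sum>j\<in>UNIV. M$i$j * z$i * z$j)"
  by (simp add: inner_vec_def matrix_vector_mult_def sum_distrib_left mult.assoc mult.left_commute)

lemma inner_diag_mat:
  "z \<bullet> (diag_mat d *v z) = (\<Sum>i\<in>UNIV. d i * (z$i)^2)"
  by (simp add: inner_matrix_vector_mult diag_mat_def if_distrib[where f="\<lambda>x. x * _"] power2_eq_square mult.assoc cong: if_cong)

lemma diag_mat_mult:
  fixes M :: "real^'n^'n"
  shows "(diag_mat d ** M) $ i $ j = d i * M$i$j"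
  by (simp add: diag_mat_def matrix_matrix_mult_def if_distrib[where f="\<lambda>x. x * _"] cong: if_cong)

lemma offdiagonal_quadratic_form_ge:
  fixes a :: "real^'n^'n" and z :: "real^'n"
  assumes "\<forall>i j. a$i$j \<ge> 0"
  shows "(\<Sum>i\<in>UNIV. \<Sum>j\<in>{j. j \<noteq> i}. a$i$j * z$i * z$j)
    \<ge> - (\<Sum>i\<in>UNIV. (\<Sum>j\<in>{j. j \<noteq> i}. (a$i$j + a$j$i) / 2) * (z$i)^2)"
proof -
  have coefficient: "(\<Sum>j\<in>{j. j \<noteq> i}. (a$i$j + a$j$i) / 2) * (z$i)^2
      = ((\<Sum>j\<in>{j. j \<noteq> i}. a$i$j * (z$i)^2) + (\<Sum>j\<in>{j. j \<noteq> i}. a$j$i * (z$i)^2)) / 2" for i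
    by (simp add: sum.distrib sum_distrib_right[symmetric] sum_divide_distrib[symmetric] algebra_simps)
  have "- (\<Sum>i\<in>UNIV. (\<Sum>j\<in>{j. j \<noteq> i}. (a$i$j + a$j$i) / 2) * (z$i)^2)
      = - ((\<Sum>i\<in>UNIV. \<Sum>j\<in>{j. j \<noteq> i}. a$i$j * (z$i)^2) + (\<Sum>i\<in>UNIV. \<Sum>j\<in>{j. j \<noteq> i}. a$j$i * (z$i)^2)) / 2"
    unfolding coefficient by (simp add: sum.distrib add_divide_distrib flip: sum_divide_distrib)
  also have "(\<Sum>i\<in>UNIV. \<Sum>j\<in>{j. j \<noteq> i}. a$j$i * (z$i)^2) = (\<Sum>i\<in>UNIV. \<Sum>j\<in>{j. j \<noteq> i}. a$i$j * (z$j)^2)"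
    using sum.swap_restrict[of UNIV UNIV "\<lambda>i j. a$i$j * (z$j)^2" "\<lambda>i j. j \<noteq> i"]
    by (simp add: eq_commute)
  also have "- ((\<Sum>i\<in>UNIV. \<Sum>j\<in>{j. j \<noteq> i}. a$i$j * (z$i)^2) + (\<Sum>i\<in>UNIV. \<Sum>j\<in>{j. j \<noteq> i}. a$i$j * (z$j)^2)) / 2
      = (\<Sum>i\<in>UNIV. \<Sum>j\<in>{j. j \<noteq> i}. - (a$i$j * (z$i)^2 + a$i$j * (z$j)^2) / 2)"
    by (simp add: sum_subtractf sum_negf flip: sum_divide_distrib add_divide_distrib)
  also have "\<dots> \<le> (\<Sum>i\<in>UNIV. \<Sum>j\<in>{j. j \<noteq> i}. a$i$j * z$i * z$j)"
  proof (intro sum_mono)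
    fix i j
    have "0 \<le> a$i$j * (z$i + z$j)^2" using assms by simp
    then show "- (a$i$j * (z$i)^2 + a$i$j * (z$j)^2) / 2 \<le> a$i$j * z$i * z$j"
      by (simp add: power2_eq_square algebra_simps)
  qed
  finally show ?thesis .
qed

lemma quadratic_form_ge_diagonal_part:
  fixes a :: "real^'n^'n" and z :: "real^'n"
  assumes "\<forall>i j. a$i$j \<ge> 0"
  shows "(\<Sum>i\<in>UNIV. \<Sum>j\<in>UNIV. a$i$j * z$i * z$j)
    \<ge> (\<Sum>i\<in>UNIV. (a$i$i - (\<Sum>j\<in>{j. j \<noteq> i}. (a$i$j + a$j$i) / 2)) * (z$i)^2)"
proof -
  have "(\<Sum>j\<in>UNIV. a$i$j * z$i * z$j) = a$i$i * (z$i)^2 + (\<Sum>j\<in>{j. j \<noteq> i}. a$i$j * z$i * z$j)" for i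
    using sum.remove[of UNIV i "\<lambda>j. a$i$j * z$i * z$j"] by (simp add: Compl_eq_Diff_UNIV[symmetric] Collect_neg_eq power2_eq_square)
  then have "(\<Sum>i\<in>UNIV. \<Sum>j\<in>UNIV. a$i$j * z$i * z$j)
      = (\<Sum>i\<in>UNIV. a$i$i * (z$i)^2) + (\<Sum>i\<in>UNIV. \<Sum>j\<in>{j. j \<noteq> i}. a$i$j * z$i * z$j)"
    by (simp add: sum.distrib)
  then show ?thesis
    using offdiagonal_quadratic_form_ge[OF assms, of z] by (simp add: left_diff_distrib sum_subtractf)
qed

lemma quadratic_form_inverse_diag_mult_A_mat:
  fixes a0 u z :: "real^'n" and a :: "real^'n^'n"
  assumes "\<forall>i. u$i \<noteq> 0"
  shows "z \<bullet> ((diag_mat (\<lambda>i. 1 / u$i) ** A_mat a0 a u) *v z)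
    = (\<Sum>i\<in>UNIV. (a0$i + (\<Sum>k\<in>UNIV. a$i$k * u$k)) / u$i * (z$i)^2)
      + (\<Sum>i\<in>UNIV. \<Sum>j\<in>UNIV. a$i$j * z$i * z$j)"
proof -
  have "(diag_mat (\<lambda>i. 1 / u$i) ** A_mat a0 a u) $ i $ j * z$i * z$j
      = (if i = j then (a0$i + (\<Sum>k\<in>UNIV. a$i$k * u$k)) / u$i * (z$i)^2 else 0) + a$i$j * z$i * z$j" for i j
    using assms by (simp add: diag_mat_mult A_mat_def field_simps power2_eq_square)
  then show ?thesis
    by (simp add: inner_matrix_vector_mult sum.distrib)
qed

lemma quadratic_form_inverse_diag_mult_A_mat_ge:
  fixes a0 u z :: "real^'n" and a :: "real^'n^'n"
  assumes "\<forall>i. a0$i \<ge> 0" and "\<forall>i j. a$i$j \<ge> 0" and "\<forall>i. u$i > 0"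
  shows "z \<bullet> ((diag_mat (\<lambda>i. 1 / u$i) ** A_mat a0 a u) *v z)
    \<ge> (\<Sum>i\<in>UNIV. a$i$i * (z$i)^2) + (\<Sum>i\<in>UNIV. \<Sum>j\<in>UNIV. a$i$j * z$i * z$j)"
proof -
  have "a$i$i \<le> (a0$i + (\<Sum>k\<in>UNIV. a$i$k * u$k)) / u$i" for i
  proof -
    have "a$i$i * u$i \<le> (\<Sum>k\<in>UNIV. a$i$k * u$k)"
      using assms(2,3) by (intro member_le_sum[where f="\<lambda>k. a$i$k * u$k"]) (auto simp: less_imp_le)
    then show ?thesis using assms(1,3) by (simp add: field_simps add_increasing)
  qed
  then have "(\<Sum>i\<in>UNIV. a$i$i * (z$i)^2) \<le> (\<Sum>i\<in>UNIV. (a0$i + (\<Sum>k\<in>UNIV. a$i$k * u$k)) / u$i * (z$i)^2)"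
    by (intro sum_mono mult_right_mono) auto
  then show ?thesis
    using assms(3) by (simp add: quadratic_form_inverse_diag_mult_A_mat less_imp_neq[symmetric])
qed

lemma H_mat_eq_diag_mat: "H_mat p u = diag_mat (\<lambda>i. p$i / (u$i)^2)"
  unfolding H_mat_def diag_mat_def ..

lemma H_eps_mat_eq_diag_mat: "H_eps_mat p eps u = diag_mat (\<lambda>i. p$i / (u$i)^2 + eps / u$i)"
  unfolding H_eps_mat_def diag_mat_def ..

lemma A0_mat_eq_diag_mat: "A0_mat mu p u = diag_mat (\<lambda>i. mu$i / p$i * (u$i)^2)"
  unfolding A0_mat_def diag_mat_def ..

lemma H_eps_mat_mult_A_eps_mat:
  fixes a0 p mu u :: "real^'n" and a :: "real^'n^'n"
  assumes "\<forall>i. p$i \<noteq> 0" and "\<forall>i. u$i \<noteq> 0"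
  shows "H_eps_mat p eps u ** A_eps_mat a0 a mu p eps u
    = H_mat p u ** A_mat a0 a u + eps *\<^sub>R (diag_mat (\<lambda>i. 1 / u$i) ** A_mat a0 a u)
      + eps *\<^sub>R diag_mat (\<lambda>i. mu$i + eps * (mu$i / p$i * u$i))"
  using assms
  by (simp add: vec_eq_iff diag_mat_mult H_eps_mat_eq_diag_mat H_mat_eq_diag_mat A_eps_mat_def A0_mat_eq_diag_mat)
      (simp add: diag_mat_def field_simps power2_eq_square)

theorem lemma4:
  fixes a0 :: "real^'n" and a :: "real^'n^'n" and p mu u z :: "real^'n" and eps :: real
  assumes "\<forall>i. a0$i \<ge> 0"
    and "\<forall>i j. a$i$j \<ge> 0"
    and "\<forall>i. p$i > 0"
    and "eps > 0"
    and "\<forall>i. mu$i \<ge> (\<Sum>j\<in>{j. j \<noteq> i}. (a$i$j + a$j$i) / 2)"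
    and "\<forall>i. u$i > 0"
  shows "z \<bullet> ((H_eps_mat p eps u ** A_eps_mat a0 a mu p eps u) *v z)
      \<ge> z \<bullet> ((H_mat p u ** A_mat a0 a u) *v z)
         + 2 * eps * (\<Sum>i\<in>UNIV. a$i$i * (z$i)^2)
         + eps^2 * (\<Sum>i\<in>UNIV. mu$i / p$i * u$i * (z$i)^2)"
proof -
  let ?Q = "\<lambda>M. z \<bullet> (M *v z)"
  have expansion: "?Q (H_eps_mat p eps u ** A_eps_mat a0 a mu p eps u)
      = ?Q (H_mat p u ** A_mat a0 a u) + eps * ?Q (diag_mat (\<lambda>i. 1 / u$i) ** A_mat a0 a u)
        + eps * (\<Sum>i\<in>UNIV. mu$i * (z$i)^2) + eps^2 * (\<Sum>i\<in>UNIV. mu$i / p$i * u$i * (z$i)^2)"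
    using assms(3,6)
    by (simp add: H_eps_mat_mult_A_eps_mat less_imp_neq[symmetric] matrix_vector_mult_add_rdistrib inner_add_right
        flip: scaleR_matrix_vector_assoc)
      (simp add: inner_diag_mat sum.distrib sum_distrib_left algebra_simps power2_eq_square)
  have "(\<Sum>i\<in>UNIV. (a$i$i - mu$i) * (z$i)^2)
      \<le> (\<Sum>i\<in>UNIV. (a$i$i - (\<Sum>j\<in>{j. j \<noteq> i}. (a$i$j + a$j$i) / 2)) * (z$i)^2)"
    using assms(5) by (intro sum_mono mult_right_mono) auto
  also have "\<dots> \<le> (\<Sum>i\<in>UNIV. \<Sum>j\<in>UNIV. a$i$j * z$i * z$j)"
    using assms(2) by (rule quadratic_form_ge_diagonal_part)
  finally have "?Q (diag_mat (\<lambda>i. 1 / u$i) ** A_mat a0 a u)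
      \<ge> 2 * (\<Sum>i\<in>UNIV. a$i$i * (z$i)^2) - (\<Sum>i\<in>UNIV. mu$i * (z$i)^2)"
    using quadratic_form_inverse_diag_mult_A_mat_ge[OF assms(1,2,6), of z]
    by (simp add: left_diff_distrib sum_subtractf)
  from mult_left_mono[OF this] show ?thesis
    unfolding expansion using assms(4) by (simp add: algebra_simps)
qed

end
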